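(* Let $m,n$ be positive integers, $\delta>0$, $t>0$. Let $k$ be the smallest integer satisfying $1+2+\dots+2^k\ge n$, let $n_j=2^j$ for $j\in[k-1]$ and let $n_k$ be defined so that $n=\sum_{j\in[k]}n_j$. Then $$\mathrm{GW}(\mathcal{M}^{\mathrm{right}}(m,n,\delta,t)) \leq \sum_{j\in[k]}\mathrm{GW}\Big(\mathcal{A}\big(m,\,n_j,\,2t\sqrt{m/n_j}+\delta,\,t\sqrt{m/n}+\delta,\,t\big)\Big).$$
   Context: For $\theta\in\mathbb{R}^{m\times n}$: $\mathrm{TV}_r(\theta) = \sum_{i\in[m]}\sum_{j\in[n-1]}|\theta[i,j+1]-\theta[i,j]|$, $\mathrm{TV}_c(\theta) = \mathrm{TV}_r(\theta^T)$, $\mathrm{TV}(\theta) = \mathrm{TV}_r(\theta)+\mathrm{TV}_c(\theta)$, $\|\cdot\|$ is the Frobenius norm. $\mathcal{M}^{\mathrm{right}}(m,n,\delta,t) = \{\theta\in\mathbb{R}^{m\times n}: \mathrm{TV}(\theta)\le\|\theta[\cdot,n]\|_1+\delta,\ \|\theta\|\le t\}$ and $\mathcal{A}(m,n,u,v,t) = \{\theta\in\mathbb{R}^{m\times n}: \mathrm{TV}_r(\theta)\le u,\ \mathrm{TV}_c(\theta)\le v,\ \|\theta\|\le t\}$. $\mathrm{GW}(A) = \mathbb{E}\sup_{v\in A}\langle Z,v\rangle$ with $Z$ a matrix of i.i.d. standard normals of matching size. *)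

theory Defs
  imports "HOL-Probability.Probability"
begin

text \<open>Matrices in R^{m x n} are represented as functions on nat x nat, 0-indexed
  (entry (i,j) with i < m, j < n), vanishing outside the index range.\<close>

definition matrices :: "nat \<Rightarrow> nat \<Rightarrow> (nat \<times> nat \<Rightarrow> real) set" where
  "matrices m n = {\<theta>. \<forall>i j. (m \<le> i \<or> n \<le> j) \<longrightarrow> \<theta> (i, j) = 0}"

definition TV_r :: "nat \<Rightarrow> nat \<Rightarrow> (nat \<times> nat \<Rightarrow> real) \<Rightarrow> real" where
  "TV_r m n \<theta> = (\<Sum>i<m. \<Sum>j<n - 1. \<bar>\<theta> (i, j + 1) - \<theta> (i, j)\<bar>)"

definition TV_c :: "nat \<Rightarrow> nat \<Rightarrow> (nat \<times> nat \<Rightarrow> real) \<Rightarrow> real" where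
  "TV_c m n \<theta> = TV_r n m (\<lambda>(i, j). \<theta> (j, i))"

definition TV :: "nat \<Rightarrow> nat \<Rightarrow> (nat \<times> nat \<Rightarrow> real) \<Rightarrow> real" where
  "TV m n \<theta> = TV_r m n \<theta> + TV_c m n \<theta>"

definition frob_norm :: "nat \<Rightarrow> nat \<Rightarrow> (nat \<times> nat \<Rightarrow> real) \<Rightarrow> real" where
  "frob_norm m n \<theta> = sqrt (\<Sum>i<m. \<Sum>j<n. (\<theta> (i, j))\<^sup>2)"

definition frob_inner :: "nat \<Rightarrow> nat \<Rightarrow> (nat \<times> nat \<Rightarrow> real) \<Rightarrow> (nat \<times> nat \<Rightarrow> real) \<Rightarrow> real" where
  "frob_inner m n Z \<theta> = (\<Sum>i<m. \<Sum>j<n. Z (i, j) * \<theta> (i, j))"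

definition last_col_l1 :: "nat \<Rightarrow> nat \<Rightarrow> (nat \<times> nat \<Rightarrow> real) \<Rightarrow> real" where
  "last_col_l1 m n \<theta> = (\<Sum>i<m. \<bar>\<theta> (i, n - 1)\<bar>)"

definition M_right :: "nat \<Rightarrow> nat \<Rightarrow> real \<Rightarrow> real \<Rightarrow> (nat \<times> nat \<Rightarrow> real) set" where
  "M_right m n \<delta> t = {\<theta> \<in> matrices m n.
      TV m n \<theta> \<le> last_col_l1 m n \<theta> + \<delta> \<and> frob_norm m n \<theta> \<le> t}"

definition A_set :: "nat \<Rightarrow> nat \<Rightarrow> real \<Rightarrow> real \<Rightarrow> real \<Rightarrow> (nat \<times> nat \<Rightarrow> real) set" where
  "A_set m n u v t = {\<theta> \<in> matrices m n.
      TV_r m n \<theta> \<le> u \<and> TV_c m n \<theta> \<le> v \<and> frob_norm m n \<theta> \<le> t}"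

definition gauss_matrix :: "nat \<Rightarrow> nat \<Rightarrow> (nat \<times> nat \<Rightarrow> real) measure" where
  "gauss_matrix m n = PiM ({..<m} \<times> {..<n}) (\<lambda>_. density lborel std_normal_density)"

definition GW :: "nat \<Rightarrow> nat \<Rightarrow> (nat \<times> nat \<Rightarrow> real) set \<Rightarrow> real" where
  "GW m n S = integral\<^sup>L (gauss_matrix m n) (\<lambda>Z. SUP \<theta>\<in>S. frob_inner m n Z \<theta>)"

end

theory Submission
  imports Defs
begin

text \<open>Cut the columns, from the right, into blocks of widths 1, 2, 4, ..., 2^(k-1) and a
  leftmost block of width n + 1 - 2^k, where 2^k \<le> n < 2^(k+1). Telescoping along a row gives
  |theta[i,n-1]| \<le> |theta[i,j]| + (variation of row i right of column j), so for theta in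
  M_right the row variation left of column j plus TV_c theta is at most
  ||theta[.,j]||_1 + delta. By Cauchy-Schwarz the column l1-norms over a set P of columns sum to
  at most sqrt(m |P|) ||theta||; averaging the previous bound over the at least w columns right of
  a block of width w, resp. over all n columns, puts the block of theta into
  A(m, w, 2t sqrt(m/w) + delta, t sqrt(m/n) + delta, t). Finally <Z, theta> splits over the
  blocks and the blocks of a Gaussian matrix are again Gaussian matrices, so taking the supremum
  and then the expectation gives the inequality.\<close>

definition col_block :: "nat \<Rightarrow> nat \<Rightarrow> nat \<Rightarrow> (nat \<times> nat \<Rightarrow> real) \<Rightarrow> (nat \<times> nat \<Rightarrow> real)" where
  "col_block m c w \<theta> = (\<lambda>(i, l). if i < m \<and> l < w then \<theta> (i, l + c) else 0)"

lemma sum_lessThan_shift_eq_atLeastLessThan: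
  fixes g :: "nat \<Rightarrow> 'a::comm_monoid_add"
  shows "(\<Sum>l<w. g (l + c)) = (\<Sum>l\<in>{c..<c + w}. g l)"
  using sum.atLeastLessThan_shift_0[of g c "c + w"] by (simp add: atLeast0LessThan comp_def add.commute)

lemma col_block_in_matrices: "col_block m c w \<theta> \<in> matrices m w"
  unfolding matrices_def col_block_def by auto

lemma TV_r_nonneg: "0 \<le> TV_r m n \<theta>"
  unfolding TV_r_def by (intro sum_nonneg) auto

lemma TV_c_nonneg: "0 \<le> TV_c m n \<theta>"
  unfolding TV_c_def by (rule TV_r_nonneg)

lemma TV_r_mono: "a \<le> b \<Longrightarrow> TV_r m a \<theta> \<le> TV_r m b \<theta>"
  unfolding TV_r_def by (intro sum_mono sum_mono2) auto

lemma TV_r_col_block_le: "TV_r m w (col_block m c w \<theta>) \<le> TV_r m (c + w) \<theta>"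
  unfolding TV_r_def
proof (rule sum_mono)
  fix i assume "i \<in> {..<m}"
  let ?d = "\<lambda>l. \<bar>\<theta> (i, l + 1) - \<theta> (i, l)\<bar>"
  have "(\<Sum>l<w - 1. \<bar>col_block m c w \<theta> (i, l + 1) - col_block m c w \<theta> (i, l)\<bar>)
      = (\<Sum>l<w - 1. ?d (l + c))"
    using \<open>i \<in> {..<m}\<close> by (intro sum.cong) (auto simp: col_block_def algebra_simps)
  also have "\<dots> = (\<Sum>l\<in>{c..<c + (w - 1)}. ?d l)"
    by (rule sum_lessThan_shift_eq_atLeastLessThan)
  also have "\<dots> \<le> (\<Sum>l<c + w - 1. ?d l)"
    by (intro sum_mono2) auto
  finally show "(\<Sum>l<w - 1. \<bar>col_block m c w \<theta> (i, l + 1) - col_block m c w \<theta> (i, l)\<bar>)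
      \<le> (\<Sum>l<c + w - 1. ?d l)" .
qed

lemma TV_c_col_block_le:
  assumes "c + w \<le> n"
  shows "TV_c m w (col_block m c w \<theta>) \<le> TV_c m n \<theta>"
proof -
  let ?v = "\<lambda>l. \<Sum>i<m - 1. \<bar>\<theta> (i + 1, l) - \<theta> (i, l)\<bar>"
  have "TV_c m w (col_block m c w \<theta>) = (\<Sum>l<w. ?v (l + c))"
    unfolding TV_c_def TV_r_def by (intro sum.cong) (auto simp: col_block_def)
  also have "\<dots> = (\<Sum>l\<in>{c..<c + w}. ?v l)"
    by (rule sum_lessThan_shift_eq_atLeastLessThan)
  also have "\<dots> \<le> (\<Sum>l<n. ?v l)"
    using assms by (intro sum_mono2) (auto intro: sum_nonneg)
  also have "\<dots> = TV_c m n \<theta>"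
    unfolding TV_c_def TV_r_def by simp
  finally show ?thesis .
qed

lemma frob_norm_col_block_le:
  assumes "c + w \<le> n"
  shows "frob_norm m w (col_block m c w \<theta>) \<le> frob_norm m n \<theta>"
  unfolding frob_norm_def
proof (intro real_sqrt_le_mono sum_mono)
  fix i assume "i \<in> {..<m}"
  then have "(\<Sum>l<w. (col_block m c w \<theta> (i, l))\<^sup>2) = (\<Sum>l<w. (\<theta> (i, l + c))\<^sup>2)"
    by (intro sum.cong) (auto simp: col_block_def)
  also have "\<dots> = (\<Sum>l\<in>{c..<c + w}. (\<theta> (i, l))\<^sup>2)"
    by (rule sum_lessThan_shift_eq_atLeastLessThan)
  also have "\<dots> \<le> (\<Sum>l<n. (\<theta> (i, l))\<^sup>2)"
    using assms by (intro sum_mono2) auto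
  finally show "(\<Sum>l<w. (col_block m c w \<theta> (i, l))\<^sup>2) \<le> (\<Sum>l<n. (\<theta> (i, l))\<^sup>2)" .
qed

lemma abs_entry_le_frob_norm:
  assumes "i < m" "l < n"
  shows "\<bar>\<theta> (i, l)\<bar> \<le> frob_norm m n \<theta>"
proof -
  have "(\<theta> (i, l))\<^sup>2 \<le> (\<Sum>l'<n. (\<theta> (i, l'))\<^sup>2)"
    using assms by (intro member_le_sum) auto
  also have "\<dots> \<le> (\<Sum>i'<m. \<Sum>l'<n. (\<theta> (i', l'))\<^sup>2)"
    using assms by (intro member_le_sum[where f = "\<lambda>i'. \<Sum>l'<n. (\<theta> (i', l'))\<^sup>2"])
      (auto intro: sum_nonneg)
  finally have "sqrt ((\<theta> (i, l))\<^sup>2) \<le> frob_norm m n \<theta>"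
    unfolding frob_norm_def by (rule real_sqrt_le_mono)
  then show ?thesis by simp
qed

lemma abs_le_abs_plus_sum_abs_diff:
  fixes a :: "nat \<Rightarrow> real"
  assumes "j \<le> N"
  shows "\<bar>a N\<bar> \<le> \<bar>a j\<bar> + (\<Sum>l\<in>{j..<N}. \<bar>a (l + 1) - a l\<bar>)"
  using assms
proof (induction N rule: dec_induct)
  case (step N)
  have "\<bar>a (Suc N)\<bar> \<le> \<bar>a N\<bar> + \<bar>a (N + 1) - a N\<bar>"
    by simp
  with step show ?case
    by (simp add: sum.atLeastLessThan_Suc)
qed simp

definition col_l1 :: "nat \<Rightarrow> (nat \<times> nat \<Rightarrow> real) \<Rightarrow> nat \<Rightarrow> real" where
  "col_l1 m \<theta> j = (\<Sum>i<m. \<bar>\<theta> (i, j)\<bar>)"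

text \<open>TV_r m (Suc j) theta is the row variation of theta within its columns 0..j.\<close>
lemma M_right_TV_r_prefix_plus_TV_c_le:
  assumes "\<theta> \<in> M_right m n \<delta> t" and "j < n"
  shows "TV_r m (Suc j) \<theta> + TV_c m n \<theta> \<le> col_l1 m \<theta> j + \<delta>"
proof -
  let ?d = "\<lambda>i l. \<bar>\<theta> (i, l + 1) - \<theta> (i, l)\<bar>"
  let ?R = "\<Sum>i<m. \<Sum>l\<in>{j..<n - 1}. ?d i l"
  have "(\<Sum>l<n - 1. ?d i l) = (\<Sum>l<j. ?d i l) + (\<Sum>l\<in>{j..<n - 1}. ?d i l)" for i
    using assms(2) by (simp add: lessThan_atLeast0 sum.atLeastLessThan_concat)
  then have "TV_r m n \<theta> = TV_r m (Suc j) \<theta> + ?R"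
    unfolding TV_r_def by (simp add: sum.distrib)
  moreover have "\<bar>\<theta> (i, n - 1)\<bar> \<le> \<bar>\<theta> (i, j)\<bar> + (\<Sum>l\<in>{j..<n - 1}. ?d i l)" for i
    using assms(2) abs_le_abs_plus_sum_abs_diff[of j "n - 1" "\<lambda>l. \<theta> (i, l)"] by simp
  then have "last_col_l1 m n \<theta> \<le> col_l1 m \<theta> j + ?R"
    unfolding last_col_l1_def col_l1_def sum.distrib[symmetric] by (intro sum_mono)
  moreover have "TV m n \<theta> \<le> last_col_l1 m n \<theta> + \<delta>"
    using assms(1) unfolding M_right_def by auto
  ultimately show ?thesis
    unfolding TV_def by linarith
qed

lemma sum_abs_le_sqrt_card_mult_sqrt_sum_squares:
  fixes f :: "'a \<Rightarrow> real"
  shows "(\<Sum>x\<in>A. \<bar>f x\<bar>) \<le> sqrt (real (card A)) * sqrt (\<Sum>x\<in>A. (f x)\<^sup>2)"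
proof -
  have "(\<Sum>x\<in>A. \<bar>f x\<bar> * 1)\<^sup>2 \<le> (\<Sum>x\<in>A. \<bar>f x\<bar>\<^sup>2) * (\<Sum>x\<in>A. 1\<^sup>2)"
    by (rule Cauchy_Schwarz_ineq_sum)
  then have "(\<Sum>x\<in>A. \<bar>f x\<bar>)\<^sup>2 \<le> real (card A) * (\<Sum>x\<in>A. (f x)\<^sup>2)"
    by (simp add: mult.commute)
  then show ?thesis
    by (simp add: real_le_rsqrt flip: real_sqrt_mult)
qed

lemma sum_col_l1_le:
  assumes "P \<subseteq> {..<n}"
  shows "(\<Sum>j\<in>P. col_l1 m \<theta> j) \<le> sqrt (real m * real (card P)) * frob_norm m n \<theta>"
proof -
  have "finite P"
    using assms finite_subset by blast
  have "(\<Sum>q\<in>P \<times> {..<m}. (\<theta> (snd q, fst q))\<^sup>2) \<le> (\<Sum>q\<in>{..<n} \<times> {..<m}. (\<theta> (snd q, fst q))\<^sup>2)"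
    using assms by (intro sum_mono2) auto
  also have "\<dots> = (\<Sum>j<n. \<Sum>i<m. (\<theta> (i, j))\<^sup>2)"
    by (simp add: sum.cartesian_product split_def)
  also have "\<dots> = (\<Sum>i<m. \<Sum>j<n. (\<theta> (i, j))\<^sup>2)"
    by (rule sum.swap)
  finally have squares: "(\<Sum>q\<in>P \<times> {..<m}. (\<theta> (snd q, fst q))\<^sup>2) \<le> (\<Sum>i<m. \<Sum>j<n. (\<theta> (i, j))\<^sup>2)" .
  have "(\<Sum>j\<in>P. col_l1 m \<theta> j) = (\<Sum>q\<in>P \<times> {..<m}. \<bar>\<theta> (snd q, fst q)\<bar>)"
    unfolding col_l1_def by (simp add: sum.cartesian_product split_def)
  also have "\<dots> \<le> sqrt (real (card (P \<times> {..<m}))) * sqrt (\<Sum>q\<in>P \<times> {..<m}. (\<theta> (snd q, fst q))\<^sup>2)"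
    by (rule sum_abs_le_sqrt_card_mult_sqrt_sum_squares)
  also have "\<dots> \<le> sqrt (real (card (P \<times> {..<m}))) * frob_norm m n \<theta>"
    unfolding frob_norm_def using squares by (intro mult_left_mono real_sqrt_le_mono) auto
  finally show ?thesis
    using \<open>finite P\<close> by (simp add: card_cartesian_product mult.commute)
qed

lemma le_of_forall_le_col_l1:
  assumes "frob_norm m n \<theta> \<le> t" and "P \<subseteq> {..<n}" and "P \<noteq> {}"
    and "\<And>j. j \<in> P \<Longrightarrow> X \<le> col_l1 m \<theta> j + \<delta>"
  shows "X \<le> t * sqrt (real m / real (card P)) + \<delta>"
proof -
  have "0 < card P"
    using assms(2,3) finite_subset by (auto simp: card_gt_0_iff)
  have "real (card P) * X \<le> (\<Sum>j\<in>P. col_l1 m \<theta> j + \<delta>)"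
    using sum_mono[of P "\<lambda>_. X", OF assms(4)] by simp
  also have "\<dots> = (\<Sum>j\<in>P. col_l1 m \<theta> j) + real (card P) * \<delta>"
    by (simp add: sum.distrib)
  also have "\<dots> \<le> sqrt (real m * real (card P)) * t + real (card P) * \<delta>"
    using sum_col_l1_le[OF assms(2), of m \<theta>] mult_left_mono[OF assms(1), of "sqrt (real m * real (card P))"]
    by simp
  also have "sqrt (real m * real (card P)) = sqrt ((real (card P))\<^sup>2 * (real m / real (card P)))"
    using \<open>0 < card P\<close> by (simp add: power2_eq_square)
  also have "\<dots> = real (card P) * sqrt (real m / real (card P))"
    by (subst real_sqrt_mult) simp
  finally have "real (card P) * X \<le> real (card P) * (t * sqrt (real m / real (card P)) + \<delta>)"
    by (simp add: algebra_simps)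
  then show ?thesis
    using \<open>0 < card P\<close> by simp
qed

text \<open>The hypothesis c + 2 * w \<le> n + 1 leaves at least w columns, from the last column of the
  block on, to average over.\<close>
lemma col_block_in_A_set:
  assumes \<theta>: "\<theta> \<in> M_right m n \<delta> t" and "0 < w" and "c + 2 * w \<le> n + 1"
  shows "col_block m c w \<theta>
    \<in> A_set m w (2 * t * sqrt (real m / real w) + \<delta>) (t * sqrt (real m / real n) + \<delta>) t"
proof -
  have norm: "frob_norm m n \<theta> \<le> t"
    using \<theta> unfolding M_right_def by auto
  moreover have "0 \<le> frob_norm m n \<theta>"
    unfolding frob_norm_def by (simp add: sum_nonneg)
  ultimately have "0 \<le> t"
    by linarith
  have fits: "c + w \<le> n"
    using assms by linarith
  let ?P = "{c + w - 1..<n}"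
  have "TV_r m w (col_block m c w \<theta>) \<le> t * sqrt (real m / real (card ?P)) + \<delta>"
  proof (rule le_of_forall_le_col_l1[OF norm])
    show "?P \<subseteq> {..<n}" "?P \<noteq> {}"
      using fits \<open>0 < w\<close> by auto
    fix j assume j: "j \<in> ?P"
    have "c + w \<le> Suc j"
      using j by auto
    then have "TV_r m w (col_block m c w \<theta>) \<le> TV_r m (Suc j) \<theta>"
      using TV_r_col_block_le[of m w c \<theta>] TV_r_mono[of "c + w" "Suc j" m \<theta>] by linarith
    then show "TV_r m w (col_block m c w \<theta>) \<le> col_l1 m \<theta> j + \<delta>"
      using M_right_TV_r_prefix_plus_TV_c_le[OF \<theta>, of j] j TV_c_nonneg[of m n \<theta>] by auto
  qed
  moreover have "t * sqrt (real m / real (card ?P)) \<le> t * sqrt (real m / real w)"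
    using assms \<open>0 \<le> t\<close> by (intro mult_left_mono real_sqrt_le_mono divide_left_mono) auto
  moreover have "0 \<le> t * sqrt (real m / real w)"
    using \<open>0 \<le> t\<close> by simp
  ultimately have row: "TV_r m w (col_block m c w \<theta>) \<le> 2 * t * sqrt (real m / real w) + \<delta>"
    by linarith
  have "TV_c m n \<theta> \<le> t * sqrt (real m / real (card {..<n})) + \<delta>"
  proof (rule le_of_forall_le_col_l1[OF norm])
    have "0 \<in> {..<n}"
      using fits \<open>0 < w\<close> by simp
    then show "{..<n} \<subseteq> {..<n}" "{..<n} \<noteq> {}"
      by blast+
    fix j assume "j \<in> {..<n}"
    then show "TV_c m n \<theta> \<le> col_l1 m \<theta> j + \<delta>"
      using M_right_TV_r_prefix_plus_TV_c_le[OF \<theta>, of j] TV_r_nonneg[of m "Suc j" \<theta>] by auto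
  qed
  then have col: "TV_c m w (col_block m c w \<theta>) \<le> t * sqrt (real m / real n) + \<delta>"
    using TV_c_col_block_le[OF fits, of m \<theta>] by simp
  have "frob_norm m w (col_block m c w \<theta>) \<le> t"
    using frob_norm_col_block_le[OF fits, of m \<theta>] norm by linarith
  then show ?thesis
    unfolding A_set_def using col_block_in_matrices row col by blast
qed

section \<open>Gaussian matrices\<close>

text \<open>The same block, but extensional (undefined off the index range) rather than zero there,
  so that it is an element of the space of gauss_matrix m w.\<close>
definition col_block_restrict ::
    "nat \<Rightarrow> nat \<Rightarrow> nat \<Rightarrow> (nat \<times> nat \<Rightarrow> real) \<Rightarrow> (nat \<times> nat \<Rightarrow> real)" where
  "col_block_restrict m c w Z = (\<lambda>p\<in>{..<m}\<times>{..<w}. Z (fst p, snd p + c))"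

lemma integrable_gauss_matrix_entry:
  assumes "p \<in> {..<m}\<times>{..<n}"
  shows "integrable (gauss_matrix m n) (\<lambda>Z. Z p)"
proof -
  let ?N = "density lborel std_normal_density"
  have "distr (gauss_matrix m n) ?N (\<lambda>Z. Z p) = ?N"
    unfolding gauss_matrix_def using assms
    by (intro distr_PiM_component prob_space_normal_density) auto
  moreover have "integrable ?N (\<lambda>x. x)"
    using integrable_std_normal_distribution_moment[of 1] by simp
  ultimately have "integrable (distr (gauss_matrix m n) ?N (\<lambda>Z. Z p)) (\<lambda>x. x)"
    by simp
  then show ?thesis
    using assms by (subst (asm) integrable_distr_eq) (auto simp: gauss_matrix_def)
qed

lemma measurable_col_block_restrict:
  assumes "c + w \<le> n"
  shows "col_block_restrict m c w \<in> measurable (gauss_matrix m n) (gauss_matrix m w)"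
  unfolding col_block_restrict_def gauss_matrix_def
proof (rule measurable_restrict)
  fix p assume "p \<in> {..<m}\<times>{..<w}"
  then have "(fst p, snd p + c) \<in> {..<m}\<times>{..<n}"
    using assms by auto
  then show "(\<lambda>Z. Z (fst p, snd p + c))
      \<in> measurable (Pi\<^sub>M ({..<m}\<times>{..<n}) (\<lambda>_. density lborel std_normal_density))
                    (density lborel std_normal_density)"
    by (rule measurable_component_singleton)
qed

lemma distr_col_block_restrict:
  assumes "c + w \<le> n"
  shows "distr (gauss_matrix m n) (gauss_matrix m w) (col_block_restrict m c w) = gauss_matrix m w"
proof -
  let ?N = "\<lambda>_. density lborel std_normal_density"
  let ?shift = "\<lambda>p. (fst p, snd p + c)"
  have "distr (Pi\<^sub>M ({..<m}\<times>{..<n}) ?N) (Pi\<^sub>M ({..<m}\<times>{..<w}) (\<lambda>p. ?N (?shift p)))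
          (\<lambda>Z. \<lambda>p\<in>{..<m}\<times>{..<w}. Z (?shift p))
        = Pi\<^sub>M ({..<m}\<times>{..<w}) (\<lambda>p. ?N (?shift p))"
    using assms by (intro distr_PiM_reindex prob_space_normal_density) (auto simp: inj_on_def)
  then show ?thesis
    unfolding gauss_matrix_def col_block_restrict_def by simp
qed

lemma integral_col_block_restrict:
  fixes g :: "(nat \<times> nat \<Rightarrow> real) \<Rightarrow> real"
  assumes "c + w \<le> n" and "g \<in> borel_measurable (gauss_matrix m w)"
  shows "integral\<^sup>L (gauss_matrix m n) (\<lambda>Z. g (col_block_restrict m c w Z))
    = integral\<^sup>L (gauss_matrix m w) g"
  using integral_distr[OF measurable_col_block_restrict[OF assms(1)] assms(2)]
    distr_col_block_restrict[OF assms(1)] by simp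

lemma integrable_col_block_restrict:
  fixes g :: "(nat \<times> nat \<Rightarrow> real) \<Rightarrow> real"
  assumes "c + w \<le> n" and "integrable (gauss_matrix m w) g"
  shows "integrable (gauss_matrix m n) (\<lambda>Z. g (col_block_restrict m c w Z))"
  using integrable_distr_eq[OF measurable_col_block_restrict[OF assms(1)]
      borel_measurable_integrable[OF assms(2)]]
    distr_col_block_restrict[OF assms(1)] assms(2) by simp

section \<open>The support function of a bounded set\<close>

definition support_fun ::
    "nat \<Rightarrow> nat \<Rightarrow> (nat \<times> nat \<Rightarrow> real) set \<Rightarrow> (nat \<times> nat \<Rightarrow> real) \<Rightarrow> real" where
  "support_fun m n S Z = (SUP \<theta>\<in>S. frob_inner m n Z \<theta>)"

lemma GW_eq_integral_support_fun: "GW m n S = integral\<^sup>L (gauss_matrix m n) (support_fun m n S)"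
  unfolding GW_def support_fun_def ..

definition entry_l1_dist ::
    "nat \<Rightarrow> nat \<Rightarrow> (nat \<times> nat \<Rightarrow> real) \<Rightarrow> (nat \<times> nat \<Rightarrow> real) \<Rightarrow> real" where
  "entry_l1_dist m n Z Z' = (\<Sum>p\<in>{..<m}\<times>{..<n}. \<bar>Z p - Z' p\<bar>)"

lemma entry_l1_dist_commute: "entry_l1_dist m n Z Z' = entry_l1_dist m n Z' Z"
  unfolding entry_l1_dist_def by (simp add: abs_minus_commute)

lemma entry_l1_dist_nonneg: "0 \<le> entry_l1_dist m n Z Z'"
  unfolding entry_l1_dist_def by (simp add: sum_nonneg)

lemma borel_measurable_entry_l1_dist:
  "(\<lambda>Z. entry_l1_dist m n Z q) \<in> borel_measurable (gauss_matrix m n)"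
  unfolding entry_l1_dist_def gauss_matrix_def
proof (rule borel_measurable_sum)
  fix p assume [measurable]: "p \<in> {..<m}\<times>{..<n}"
  show "(\<lambda>Z. \<bar>Z p - q p\<bar>)
      \<in> borel_measurable (Pi\<^sub>M ({..<m}\<times>{..<n}) (\<lambda>_. density lborel std_normal_density))"
    by measurable
qed

lemma integrable_entry_l1_dist_zero:
  "integrable (gauss_matrix m n) (\<lambda>Z. entry_l1_dist m n Z (\<lambda>_. 0))"
  unfolding entry_l1_dist_def using integrable_gauss_matrix_entry by auto

definition rational_matrices :: "nat \<Rightarrow> nat \<Rightarrow> (nat \<times> nat \<Rightarrow> real) set" where
  "rational_matrices m n = PiE ({..<m}\<times>{..<n}) (\<lambda>_. \<rat>)"

lemma countable_rational_matrices: "countable (rational_matrices m n)"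
  unfolding rational_matrices_def by (intro countable_PiE countable_rat) auto

lemma rational_matrices_dense:
  assumes "0 < \<epsilon>"
  shows "\<exists>q\<in>rational_matrices m n. entry_l1_dist m n Z q < \<epsilon>"
proof -
  define e where "e = \<epsilon> / (real m * real n + 1)"
  have e: "0 < e"
    unfolding e_def using assms by (intro divide_pos_pos) (auto intro!: add_nonneg_pos)
  have "\<forall>p. \<exists>r. r \<in> \<rat> \<and> Z p < r \<and> r < Z p + e"
    using Rats_dense_in_real e by (metis less_add_same_cancel1)
  then obtain r where r: "\<And>p. r p \<in> \<rat> \<and> Z p < r p \<and> r p < Z p + e"
    by metis
  define q where "q = restrict r ({..<m}\<times>{..<n})"
  have "q \<in> rational_matrices m n"
    unfolding q_def rational_matrices_def using r by auto
  moreover have "entry_l1_dist m n Z q \<le> (\<Sum>p\<in>{..<m}\<times>{..<n}. e)"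
  proof (unfold entry_l1_dist_def q_def, intro sum_mono)
    fix p
    show "\<bar>Z p - restrict r ({..<m}\<times>{..<n}) p\<bar> \<le> e" if "p \<in> {..<m}\<times>{..<n}"
      using r[of p] that by (simp add: abs_le_iff)
  qed
  moreover have "(\<Sum>p\<in>{..<m}\<times>{..<n}. e) < \<epsilon>"
  proof -
    have "(\<Sum>p\<in>{..<m}\<times>{..<n}. e) = \<epsilon> * (real m * real n / (real m * real n + 1))"
      unfolding e_def by (simp add: card_cartesian_product)
    also have "\<dots> < \<epsilon> * 1"
      using assms by (intro mult_strict_left_mono) (auto simp: add_nonneg_pos)
    finally show ?thesis by simp
  qed
  ultimately show ?thesis
    by (meson le_less_trans)
qed

locale entrywise_bounded =
  fixes m n :: nat and S :: "(nat \<times> nat \<Rightarrow> real) set" and B :: real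
  assumes bound_nonneg: "0 \<le> B"
    and zero_mem: "(\<lambda>_. 0) \<in> S"
    and abs_entry_le: "\<And>\<theta> p. \<theta> \<in> S \<Longrightarrow> p \<in> {..<m}\<times>{..<n} \<Longrightarrow> \<bar>\<theta> p\<bar> \<le> B"
begin

lemma frob_inner_le_add_entry_l1_dist:
  assumes "\<theta> \<in> S"
  shows "frob_inner m n Z \<theta> \<le> frob_inner m n Z' \<theta> + B * entry_l1_dist m n Z Z'"
proof -
  have "frob_inner m n Z \<theta> - frob_inner m n Z' \<theta> = (\<Sum>p\<in>{..<m}\<times>{..<n}. (Z p - Z' p) * \<theta> p)"
    unfolding frob_inner_def by (simp add: sum.cartesian_product sum_subtractf algebra_simps)
  also have "\<dots> \<le> (\<Sum>p\<in>{..<m}\<times>{..<n}. \<bar>Z p - Z' p\<bar> * B)"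
  proof (rule sum_mono)
    fix p assume "p \<in> {..<m}\<times>{..<n}"
    then have "\<bar>\<theta> p\<bar> \<le> B"
      using abs_entry_le assms by blast
    then have "\<bar>Z p - Z' p\<bar> * \<bar>\<theta> p\<bar> \<le> \<bar>Z p - Z' p\<bar> * B"
      by (intro mult_left_mono) auto
    then show "(Z p - Z' p) * \<theta> p \<le> \<bar>Z p - Z' p\<bar> * B"
      by (metis abs_ge_self abs_mult order_trans)
  qed
  also have "\<dots> = B * entry_l1_dist m n Z Z'"
    unfolding entry_l1_dist_def by (simp add: sum_distrib_left mult.commute)
  finally show ?thesis by simp
qed

lemma frob_inner_le_entry_l1_dist_zero:
  "\<theta> \<in> S \<Longrightarrow> frob_inner m n Z \<theta> \<le> B * entry_l1_dist m n Z (\<lambda>_. 0)"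
  using frob_inner_le_add_entry_l1_dist[of \<theta> Z "\<lambda>_. 0"] by (simp add: frob_inner_def)

lemma frob_inner_le_support_fun: "\<theta> \<in> S \<Longrightarrow> frob_inner m n Z \<theta> \<le> support_fun m n S Z"
  unfolding support_fun_def
  by (rule cSUP_upper2[OF bdd_aboveI2]) (auto intro: frob_inner_le_entry_l1_dist_zero)

lemma support_fun_nonneg: "0 \<le> support_fun m n S Z"
  using frob_inner_le_support_fun[OF zero_mem, of Z] by (simp add: frob_inner_def)

lemma support_fun_le_entry_l1_dist_zero:
  "support_fun m n S Z \<le> B * entry_l1_dist m n Z (\<lambda>_. 0)"
  unfolding support_fun_def using zero_mem frob_inner_le_entry_l1_dist_zero
  by (intro cSUP_least) auto

lemma support_fun_lipschitz:
  "support_fun m n S Z \<le> support_fun m n S Z' + B * entry_l1_dist m n Z Z'"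
  unfolding support_fun_def[of m n S Z] using zero_mem
proof (intro cSUP_least)
  fix \<theta> assume "\<theta> \<in> S"
  then show "frob_inner m n Z \<theta> \<le> support_fun m n S Z' + B * entry_l1_dist m n Z Z'"
    using frob_inner_le_add_entry_l1_dist[of \<theta> Z Z'] frob_inner_le_support_fun[of \<theta> Z'] by linarith
qed auto

text \<open>Being Lipschitz, the support function is a supremum over a countable set of measurable
  functions of Z.\<close>
lemma support_fun_eq_SUP_rational_matrices:
  "support_fun m n S Z
    = (SUP q\<in>rational_matrices m n. support_fun m n S q - B * entry_l1_dist m n Z q)"
proof (rule antisym)
  let ?f = "\<lambda>q. support_fun m n S q - B * entry_l1_dist m n Z q"
  have le: "?f q \<le> support_fun m n S Z" for q
    using support_fun_lipschitz[of q Z] entry_l1_dist_commute[of m n Z q] by simp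
  show "support_fun m n S Z \<le> (SUP q\<in>rational_matrices m n. ?f q)"
  proof (rule field_le_epsilon)
    fix \<epsilon> :: real assume "0 < \<epsilon>"
    then obtain q where q: "q \<in> rational_matrices m n" "entry_l1_dist m n Z q < \<epsilon> / (2 * B + 1)"
      using rational_matrices_dense[of "\<epsilon> / (2 * B + 1)" m n Z] bound_nonneg by auto
    have "2 * B * entry_l1_dist m n Z q \<le> (2 * B + 1) * entry_l1_dist m n Z q"
      using entry_l1_dist_nonneg[of m n Z q] by (intro mult_right_mono) auto
    also have "\<dots> \<le> \<epsilon>"
      using q(2) bound_nonneg by (simp add: field_simps)
    finally have "2 * B * entry_l1_dist m n Z q \<le> \<epsilon>" .
    moreover have "?f q \<le> (SUP q\<in>rational_matrices m n. ?f q)"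
      using q(1) le by (intro cSUP_upper bdd_aboveI2)
    ultimately show "support_fun m n S Z \<le> (SUP q\<in>rational_matrices m n. ?f q) + \<epsilon>"
      using support_fun_lipschitz[of Z q] by linarith
  qed
  show "(SUP q\<in>rational_matrices m n. ?f q) \<le> support_fun m n S Z"
    using rational_matrices_dense[of 1 m n Z] le by (intro cSUP_least) auto
qed

lemma borel_measurable_support_fun: "support_fun m n S \<in> borel_measurable (gauss_matrix m n)"
proof -
  have "support_fun m n S
      = (\<lambda>Z. SUP q\<in>rational_matrices m n. support_fun m n S q - B * entry_l1_dist m n Z q)"
    using support_fun_eq_SUP_rational_matrices by blast
  also have "\<dots> \<in> borel_measurable (gauss_matrix m n)"
  proof (rule borel_measurable_cSUP[OF countable_rational_matrices])
    show "(\<lambda>Z. support_fun m n S q - B * entry_l1_dist m n Z q) \<in> borel_measurable (gauss_matrix m n)"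
      for q
      by (intro borel_measurable_diff borel_measurable_times borel_measurable_const
          borel_measurable_entry_l1_dist)
    show "bdd_above ((\<lambda>q. support_fun m n S q - B * entry_l1_dist m n Z q) ` rational_matrices m n)"
      for Z
      using support_fun_lipschitz[of _ Z] entry_l1_dist_commute[of m n Z]
      by (intro bdd_aboveI2[where M = "support_fun m n S Z"]) (simp add: algebra_simps)
  qed
  finally show ?thesis .
qed

lemma integrable_support_fun: "integrable (gauss_matrix m n) (support_fun m n S)"
proof (rule Bochner_Integration.integrable_bound)
  show "integrable (gauss_matrix m n) (\<lambda>Z. B * entry_l1_dist m n Z (\<lambda>_. 0))"
    using integrable_entry_l1_dist_zero by simp
  show "AE Z in gauss_matrix m n. norm (support_fun m n S Z) \<le> norm (B * entry_l1_dist m n Z (\<lambda>_. 0))"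
    using support_fun_le_entry_l1_dist_zero support_fun_nonneg
    by (intro AE_I2) (metis abs_ge_self abs_of_nonneg order_trans real_norm_def)
qed (rule borel_measurable_support_fun)

end

lemma entrywise_bounded_A_set:
  assumes "0 \<le> u" and "0 \<le> v" and "0 \<le> t"
  shows "entrywise_bounded m n (A_set m n u v t) t"
proof
  show "(\<lambda>_. 0) \<in> A_set m n u v t"
    using assms unfolding A_set_def matrices_def TV_r_def TV_c_def frob_norm_def by auto
  fix \<theta> p assume "\<theta> \<in> A_set m n u v t" and "p \<in> {..<m}\<times>{..<n}"
  then show "\<bar>\<theta> p\<bar> \<le> t"
    using abs_entry_le_frob_norm[of "fst p" m "snd p" n \<theta>] unfolding A_set_def by auto
qed fact

section \<open>Splitting the Gaussian width over column blocks\<close>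

lemma frob_inner_col_block:
  "frob_inner m w (col_block_restrict m c w Z) (col_block m c w \<theta>)
    = (\<Sum>i<m. \<Sum>l<w. Z (i, l + c) * \<theta> (i, l + c))"
  unfolding frob_inner_def col_block_restrict_def col_block_def by simp

lemma GW_le_sum_GW_col_blocks:
  fixes J :: "'j set" and c w :: "'j \<Rightarrow> nat" and A :: "'j \<Rightarrow> (nat \<times> nat \<Rightarrow> real) set"
  assumes "finite J" and "S \<noteq> {}"
    and fits: "\<And>j. j \<in> J \<Longrightarrow> c j + w j \<le> n"
    and cover: "\<And>f :: nat \<Rightarrow> real. (\<Sum>l<n. f l) = (\<Sum>j\<in>J. \<Sum>l<w j. f (l + c j))"
    and blocks: "\<And>\<theta> j. \<theta> \<in> S \<Longrightarrow> j \<in> J \<Longrightarrow> col_block m (c j) (w j) \<theta> \<in> A j"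
    and bounded: "\<And>j. j \<in> J \<Longrightarrow> entrywise_bounded m (w j) (A j) B"
  shows "GW m n S \<le> (\<Sum>j\<in>J. GW m (w j) (A j))"
proof -
  let ?h = "\<lambda>j Z. support_fun m (w j) (A j) (col_block_restrict m (c j) (w j) Z)"
  have pointwise: "support_fun m n S Z \<le> (\<Sum>j\<in>J. ?h j Z)" for Z
    unfolding support_fun_def[of m n S]
  proof (rule cSUP_least[OF \<open>S \<noteq> {}\<close>])
    fix \<theta> assume "\<theta> \<in> S"
    have "frob_inner m n Z \<theta> = (\<Sum>i<m. \<Sum>j\<in>J. \<Sum>l<w j. Z (i, l + c j) * \<theta> (i, l + c j))"
      unfolding frob_inner_def using cover by simp
    also have "\<dots> = (\<Sum>j\<in>J. frob_inner m (w j) (col_block_restrict m (c j) (w j) Z)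
                                             (col_block m (c j) (w j) \<theta>))"
      unfolding frob_inner_col_block by (rule sum.swap)
    also have "\<dots> \<le> (\<Sum>j\<in>J. ?h j Z)"
      using \<open>\<theta> \<in> S\<close> blocks bounded
      by (intro sum_mono entrywise_bounded.frob_inner_le_support_fun) auto
    finally show "frob_inner m n Z \<theta> \<le> (\<Sum>j\<in>J. ?h j Z)" .
  qed
  have integrable: "integrable (gauss_matrix m n) (?h j)" if "j \<in> J" for j
    using fits[OF that] entrywise_bounded.integrable_support_fun[OF bounded[OF that]]
    by (rule integrable_col_block_restrict)
  have "GW m n S \<le> integral\<^sup>L (gauss_matrix m n) (\<lambda>Z. \<Sum>j\<in>J. ?h j Z)"
    unfolding GW_eq_integral_support_fun
    using integrable pointwise entrywise_bounded.support_fun_nonneg[OF bounded]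
    by (intro integral_mono') (auto intro: sum_nonneg)
  also have "\<dots> = (\<Sum>j\<in>J. integral\<^sup>L (gauss_matrix m n) (?h j))"
    using integrable by (rule Bochner_Integration.integral_sum)
  also have "\<dots> = (\<Sum>j\<in>J. GW m (w j) (A j))"
    unfolding GW_eq_integral_support_fun
    using fits entrywise_bounded.borel_measurable_support_fun[OF bounded]
    by (intro sum.cong refl integral_col_block_restrict)
  finally show ?thesis .
qed

section \<open>Dyadic column blocks\<close>

lemma sum_lessThan_add:
  fixes f :: "nat \<Rightarrow> 'a::comm_monoid_add"
  shows "(\<Sum>l<a + b. f l) = (\<Sum>l<a. f l) + (\<Sum>l<b. f (l + a))"
proof -
  have "(\<Sum>l<a + b. f l) = (\<Sum>l<a. f l) + (\<Sum>l\<in>{a..<a + b}. f l)"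
    by (simp add: lessThan_atLeast0 sum.atLeastLessThan_concat)
  then show ?thesis
    by (simp add: sum_lessThan_shift_eq_atLeastLessThan)
qed

lemma sum_lessThan_split_dyadic:
  fixes f :: "nat \<Rightarrow> 'a::comm_monoid_add"
  assumes "2 ^ K \<le> n + 1"
  shows "(\<Sum>l<n. f l)
    = (\<Sum>l<n + 1 - 2 ^ K. f l) + (\<Sum>j<K. \<Sum>l<2 ^ j. f (l + (n + 1 - 2 ^ Suc j)))"
  using assms
proof (induction K)
  case (Suc K)
  have "(2::nat) ^ K \<le> 2 ^ Suc K"
    by simp
  then have IH: "(\<Sum>l<n. f l)
      = (\<Sum>l<n + 1 - 2 ^ K. f l) + (\<Sum>j<K. \<Sum>l<2 ^ j. f (l + (n + 1 - 2 ^ Suc j)))"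
    using Suc.prems by (intro Suc.IH) linarith
  have "n + 1 - 2 ^ K = (n + 1 - 2 ^ Suc K) + 2 ^ K"
    using Suc.prems by simp
  then have "(\<Sum>l<n + 1 - 2 ^ K. f l)
      = (\<Sum>l<n + 1 - 2 ^ Suc K. f l) + (\<Sum>l<2 ^ K. f (l + (n + 1 - 2 ^ Suc K)))"
    by (simp only: sum_lessThan_add)
  with IH show ?case
    by (simp add: ac_simps)
qed simp

lemma dyadic_col_blocks:
  fixes n k :: nat
  assumes "2 ^ k \<le> n" and "n < 2 ^ Suc k"
  defines "w \<equiv> \<lambda>j. if j < k then 2 ^ j else n + 1 - 2 ^ k"
    and "c \<equiv> \<lambda>j. if j < k then n + 1 - 2 ^ Suc j else 0"
  shows "j \<le> k \<Longrightarrow> 0 < w j \<and> c j + 2 * w j \<le> n + 1"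
    and "(\<Sum>l<n. f l) = (\<Sum>j\<le>k. \<Sum>l<w j. f (l + c j))"
proof -
  assume "j \<le> k"
  show "0 < w j \<and> c j + 2 * w j \<le> n + 1"
  proof (cases "j < k")
    case True
    then have "(2::nat) ^ Suc j \<le> 2 ^ k"
      by (intro power_increasing) auto
    with True assms(1) show ?thesis
      by (simp add: w_def c_def)
  next
    case False
    with assms show ?thesis
      by (simp add: w_def c_def)
  qed
next
  have "(\<Sum>l<n. f l) = (\<Sum>l<w k. f (l + c k)) + (\<Sum>j<k. \<Sum>l<w j. f (l + c j))"
    using sum_lessThan_split_dyadic[of k n f] assms(1) by (simp add: w_def c_def)
  then show "(\<Sum>l<n. f l) = (\<Sum>j\<le>k. \<Sum>l<w j. f (l + c j))"
    by (simp add: lessThan_Suc_atMost[symmetric] add.commute)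
qed

lemma LEAST_sum_power2_bounds:
  fixes n :: nat
  assumes "0 < n"
  defines "k \<equiv> LEAST k. n \<le> (\<Sum>j\<le>k. 2 ^ j)"
  shows "2 ^ k \<le> n" and "n < 2 ^ Suc k"
proof -
  have "n \<le> (\<Sum>j\<le>K. 2 ^ j) \<longleftrightarrow> n < 2 ^ Suc K" for K
  proof -
    have "(\<Sum>j\<le>K. 2 ^ j) = (2::nat) ^ Suc K - 1"
      using sum_power2[of "Suc K"] by (simp add: atLeast0LessThan lessThan_Suc_atMost)
    moreover have "0 < (2::nat) ^ Suc K"
      by simp
    ultimately show ?thesis
      by linarith
  qed
  then have k: "k = (LEAST k. n < 2 ^ Suc k)"
    unfolding k_def by simp
  have "n < 2 ^ Suc n"
    using less_exp[of "Suc n"] by (rule Suc_lessD)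
  then show "n < 2 ^ Suc k"
    unfolding k by (rule LeastI)
  show "2 ^ k \<le> n"
  proof (cases k)
    case (Suc k')
    then have "\<not> n < 2 ^ Suc k'"
      unfolding k by (metis lessI not_less_Least)
    with Suc show ?thesis
      by simp
  qed (use assms in simp)
qed

theorem lemma5p15:
  fixes m n :: nat and \<delta> t :: real and k :: nat and nb :: "nat \<Rightarrow> nat"
  assumes "0 < m" and "0 < n" and "0 < \<delta>" and "0 < t"
  defines "k \<equiv> (LEAST k::nat. n \<le> (\<Sum>j\<le>k. 2 ^ j))"
  defines "nb \<equiv> (\<lambda>j. if j < k then 2 ^ j else n - (\<Sum>i<k. 2 ^ i))"
  shows "GW m n (M_right m n \<delta> t)
    \<le> (\<Sum>j\<le>k. GW m (nb j)
          (A_set m (nb j) (2 * t * sqrt (real m / real (nb j)) + \<delta>)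
                          (t * sqrt (real m / real n) + \<delta>) t))"
proof -
  have k: "2 ^ k \<le> n" "n < 2 ^ Suc k"
    using LEAST_sum_power2_bounds[OF \<open>0 < n\<close>] unfolding k_def by auto
  have nb: "nb = (\<lambda>j. if j < k then 2 ^ j else n + 1 - 2 ^ k)"
    using sum_power2[of k] k(1) by (auto simp: nb_def atLeast0LessThan)
  let ?c = "\<lambda>j. if j < k then n + 1 - 2 ^ Suc j else 0"
  have fits: "0 < nb j \<and> ?c j + 2 * nb j \<le> n + 1" if "j \<le> k" for j
    using dyadic_col_blocks(1)[OF k that] by (simp add: nb)
  have cover: "(\<Sum>l<n. f l) = (\<Sum>j\<le>k. \<Sum>l<nb j. f (l + ?c j))" for f :: "nat \<Rightarrow> real"
    using dyadic_col_blocks(2)[OF k] by (simp add: nb)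
  show ?thesis
  proof (rule GW_le_sum_GW_col_blocks[where c = ?c and B = t])
    show "M_right m n \<delta> t \<noteq> {}"
      using assms unfolding M_right_def matrices_def TV_def TV_r_def TV_c_def frob_norm_def
        last_col_l1_def by (auto intro!: exI[of _ "\<lambda>_. 0"])
    show "col_block m (?c j) (nb j) \<theta>
        \<in> A_set m (nb j) (2 * t * sqrt (real m / real (nb j)) + \<delta>) (t * sqrt (real m / real n) + \<delta>) t"
      if "\<theta> \<in> M_right m n \<delta> t" and "j \<in> {..k}" for \<theta> j
      using that fits[of j] by (intro col_block_in_A_set) auto
    show "entrywise_bounded m (nb j)
        (A_set m (nb j) (2 * t * sqrt (real m / real (nb j)) + \<delta>) (t * sqrt (real m / real n) + \<delta>) t) t"
      for j
      using assms by (intro entrywise_bounded_A_set) auto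
    show "?c j + nb j \<le> n" if "j \<in> {..k}" for j
      using fits[of j] that by fastforce
  qed (use cover in auto)
qed

end
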